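(* Let $k,\delta>0$, $p\in\mathbb C[z]\setminus\{0\}$ and $m\in\mathbb N$. Then for every sufficiently large $n\in\mathbb N$ there exists a connected open set $W_n\subset\mathbb C$ with $0\in W_n\subseteq\delta\mathbb D$ such that the polynomial $q_n=kz((1+z)^n-p)$ has at least $m$ zeros (counted with multiplicity) in $W_n$ and satisfies $q_n(W_n)\subseteq\mathbb D$.
   Context: $\mathbb D=\{z\in\mathbb C:|z|<1\}$. *)

theory Defs
  imports "HOL-Analysis.Analysis" "HOL-Computational_Algebra.Polynomial"
begin

definition zeros_in :: "complex poly \<Rightarrow> complex set \<Rightarrow> nat" where
  "zeros_in q W = (\<Sum>z\<in>{z\<in>W. poly q z = 0}. order z q)"

end

theory Submission
  imports Defs "HOL-Real_Asymp.Real_Asymp"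
begin

text \<open>
  Write p = z^j h with h(0) \<noteq> 0. The substitution z = e^(w/n) - 1 turns (1 + z)^n = p(z) into
  e^w = z^j h(z). For large n and every l < m this equation has a solution w_l within distance 1
  of c_l = j ln(t/n) + i(j\<pi> + 2\<pi>l) + Ln h(0), where t = 1 + j ln n: on that disc e^(-c_l) z^j h(z)
  stays within 1/4 of 1, so w \<mapsto> c_l + Ln(e^(-c_l) z^j h(z)) maps the disc into itself and
  Brouwer's fixed point theorem applies. The points z_l = e^(w_l/n) - 1 are distinct zeros of q
  (the Im w_l are about 2\<pi> apart), they tend to 0, and |1 + z_l| < e^(K/n) with K independent
  of n. On W = {|z| < r, |1 + z| < e^(K/n)} we have |(1 + z)^n| \<le> e^K, so
  |q| < k r (e^K + max |p|) \<le> 1 once r is small.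
\<close>

lemma norm_exp_minus_1_minus_le_square:
  fixes x :: "'a::{real_normed_field,banach}"
  assumes "norm x \<le> 1"
  shows "norm (exp x - 1 - x) \<le> norm x ^ 2"
proof -
  let ?t = "\<lambda>n. inverse (fact (n + 2)) *\<^sub>R (x ^ (n + 2))"
  have "summable (\<lambda>n. norm (?t n))"
    using summable_ignore_initial_segment[OF summable_exp_generic[of "norm x"], of 2]
    by (simp add: norm_power norm_mult)
  then have "norm (exp x - 1 - x) \<le> (\<Sum>n. norm (?t n))"
    using exp_first_two_terms[of x] summable_norm by fastforce
  also have "\<dots> = exp (norm x) - 1 - norm x"
    using exp_first_two_terms[of "norm x"] by (simp add: norm_power norm_mult)
  also have "\<dots> \<le> norm x ^ 2"
    using exp_bound[of "norm x"] assms by simp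
  finally show ?thesis .
qed

lemma norm_Ln_le:
  fixes y :: complex
  assumes "norm (y - 1) \<le> 1/2"
  shows "norm (Ln y) \<le> 2 * norm (y - 1)"
proof -
  define t where "t = norm (y - 1)"
  have t: "0 \<le> t" "t \<le> 1/2" using assms by (auto simp: t_def)
  have "norm (Ln y - (y - 1)) \<le> t\<^sup>2 / (1 - t)"
    using Ln_approx_linear[of "y - 1"] t by (simp add: t_def)
  also have "\<dots> \<le> t"
    using t mult_left_mono[of "2 * t" 1 t] by (simp add: field_simps power2_eq_square)
  finally show ?thesis
    using norm_triangle_ineq[of "Ln y - (y - 1)" "y - 1"] by (simp add: t_def)
qed

lemma norm_power_mult_minus_1_le:
  fixes x y :: "'a::real_normed_field"
  assumes "norm (x - 1) \<le> \<epsilon>" and "norm (y - 1) \<le> \<epsilon>"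
  shows "norm (x ^ j * y - 1) \<le> (1 + \<epsilon>) ^ (j + 1) - 1"
proof (induction j)
  case 0
  then show ?case using assms(2) by simp
next
  case (Suc j)
  have \<epsilon>: "0 \<le> \<epsilon>" using assms(1) norm_ge_zero order_trans by blast
  have "norm x \<le> 1 + \<epsilon>"
    using norm_triangle_ineq[of "x - 1" 1] assms(1) by simp
  have "x ^ Suc j * y - 1 = x * (x ^ j * y - 1) + (x - 1)" by (simp add: algebra_simps)
  then have "norm (x ^ Suc j * y - 1) \<le> norm x * norm (x ^ j * y - 1) + norm (x - 1)"
    by (metis norm_mult norm_triangle_ineq)
  also have "\<dots> \<le> (1 + \<epsilon>) * ((1 + \<epsilon>) ^ (j + 1) - 1) + \<epsilon>"
    using Suc.IH \<open>norm x \<le> 1 + \<epsilon>\<close> assms(1) \<epsilon> by (intro add_mono mult_mono) auto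
  also have "\<dots> = (1 + \<epsilon>) ^ (Suc j + 1) - 1" by (simp add: algebra_simps)
  finally show ?case .
qed

lemma exp_eq_exp_mult_solvable:
  fixes G :: "complex \<Rightarrow> complex"
  assumes "continuous_on (cball c 1) G" and "\<And>w. w \<in> cball c 1 \<Longrightarrow> norm (G w - 1) \<le> 1/4"
  obtains w where "w \<in> cball c 1" and "exp w = exp c * G w"
proof -
  have G: "Re (G w) > 0" "norm (Ln (G w)) \<le> 1" if "w \<in> cball c 1" for w
    using assms(2)[OF that] abs_Re_le_cmod[of "G w - 1"] norm_Ln_le[of "G w"] by auto
  define T where "T w = c + Ln (G w)" for w
  have "continuous_on (cball c 1) T"
    unfolding T_def using G(1) by (intro continuous_intros assms(1)) (force simp: complex_nonpos_Reals_iff)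
  moreover have "T \<in> cball c 1 \<rightarrow> cball c 1"
    using G(2) by (auto simp: T_def dist_norm)
  ultimately obtain w where w: "w \<in> cball c 1" "T w = w"
    using brouwer_ball[of 1 c T] by auto
  have "G w \<noteq> 0" using G(1)[OF w(1)] by auto
  then have "exp w = exp c * G w" by (metis T_def w(2) exp_add exp_Ln)
  with w(1) show thesis by (rule that)
qed

lemma one_plus_power_le_exp:
  fixes \<epsilon> :: real
  assumes "0 \<le> \<epsilon>"
  shows "(1 + \<epsilon>) ^ m \<le> exp (real m * \<epsilon>)"
  by (metis assms add.commute exp_ge_add_one_self exp_of_nat_mult power_mono add_nonneg_nonneg zero_le_one)

lemma exp_divide_estimates_in_cball:
  fixes w c :: complex and n :: nat and t r :: real
  defines "U \<equiv> norm c + 1"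
  assumes "n > 0" and "t > 0" and "norm (w - c) \<le> 1" and "U / n \<le> 1/2" and "U / n < r / 2"
  shows "norm (exp (w / n) - 1) < r"
    and "norm (- of_real (n / t) * (exp (w / n) - 1) - 1) \<le> (norm (c + t) + 1) / t + U\<^sup>2 / (n * t)"
proof -
  define x where "x = w / n"
  define e where "e = exp x - 1 - x"
  have "norm w \<le> U" using norm_triangle_ineq2[of w c] assms(4) by (simp add: U_def)
  then have x: "norm x \<le> U / n" using assms(2) by (simp add: x_def norm_divide divide_right_mono)
  have "norm e \<le> (norm x)\<^sup>2"
    using norm_exp_minus_1_minus_le_square[of x] x assms(5) by (simp add: e_def)
  also have "\<dots> \<le> (U / n)\<^sup>2" using x by (simp add: power_mono)
  finally have e: "norm e \<le> (U / n)\<^sup>2" .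
  have "norm (exp x - 1) \<le> norm x + (U / n)\<^sup>2"
    using norm_triangle_ineq[of x e] e by (simp add: e_def)
  also have "(U / n)\<^sup>2 \<le> U / n"
    using assms(5) x norm_ge_zero[of x] mult_left_le_one_le[of "U / n" "U / n"]
    unfolding power2_eq_square by linarith
  finally have "norm (exp x - 1) < r" using x assms(6) by linarith
  then show "norm (exp (w / n) - 1) < r" by (simp add: x_def)
  have "- of_real (n / t) * (exp x - 1) - 1 = - ((w + t) / t) - of_real (n / t) * e"
    using assms(2,3) by (simp add: x_def e_def field_simps)
  then have "norm (- of_real (n / t) * (exp x - 1) - 1) \<le> norm ((w + t) / t) + norm (of_real (n / t) * e)"
    by (metis norm_minus_cancel norm_triangle_ineq4)
  also have "norm ((w + t) / t) \<le> (norm (c + t) + 1) / t"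
    using norm_triangle_ineq[of "c + t" "w - c"] assms(3,4)
    by (simp add: norm_divide divide_right_mono add.commute)
  also have "norm (of_real (n / t) * e) = n / t * norm e"
    using assms(3) unfolding norm_mult norm_of_real by simp
  also have "\<dots> \<le> n / t * (U / n)\<^sup>2"
    using e assms(3) by (intro mult_left_mono) auto
  also have "\<dots> = U\<^sup>2 / (n * t)" using assms(2) by (simp add: power2_eq_square field_simps)
  finally show "norm (- of_real (n / t) * (exp (w / n) - 1) - 1) \<le> (norm (c + t) + 1) / t + U\<^sup>2 / (n * t)"
    by (simp add: x_def)
qed

text \<open>
  With z = e^(w/n) - 1 and e^c = (-t/n)^j h(0), the equation z^j h(z) = e^w reads
  e^w = e^c A(w)^j H(w) with A(w) = -n z / t and H(w) = h(z) / h(0), both close to 1 on the disc.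
\<close>
lemma exp_equation_solution_in_cball:
  fixes h :: "complex poly" and j n :: nat and t r :: real and c :: complex
  defines "a \<equiv> poly h 0" and "\<epsilon> \<equiv> 1 / (8 * (real j + 1))" and "U \<equiv> norm c + 1"
  assumes "n > 0" and "t > 0" and "a \<noteq> 0" and exp_c: "exp c = of_real (- t / n) ^ j * a"
    and h_near: "\<And>z. norm z < r \<Longrightarrow> norm (poly h z / a - 1) \<le> \<epsilon>"
    and U_small: "U / n \<le> 1/2" "U / n < r / 2"
    and t_large: "j > 0 \<Longrightarrow> (norm (c + t) + 1) / t + U\<^sup>2 / (n * t) \<le> \<epsilon>"
  obtains w :: complex where "w \<in> cball c 1" and "norm (exp (w / n) - 1) < r"
    and "(exp (w / n) - 1) ^ j * poly h (exp (w / n) - 1) = exp w"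
proof -
  define z where "z w = exp (w / n) - 1" for w :: complex
  define A where "A w = - of_real (n / t) * z w" for w
  define H where "H w = poly h (z w) / a" for w
  define G where "G w = A w ^ j * H w" for w
  have \<epsilon>: "0 \<le> \<epsilon>" by (simp add: \<epsilon>_def)
  have est: "norm (z w) < r" "norm (H w - 1) \<le> \<epsilon>" "j > 0 \<Longrightarrow> norm (A w - 1) \<le> \<epsilon>"
    if "w \<in> cball c 1" for w
  proof -
    have "norm (w - c) \<le> 1" using that by (simp add: dist_norm norm_minus_commute)
    note est = exp_divide_estimates_in_cball[OF assms(4,5) this U_small[unfolded U_def]]
    show "norm (z w) < r" using est(1) by (simp add: z_def)
    then show "norm (H w - 1) \<le> \<epsilon>" using h_near by (simp add: H_def)
    show "norm (A w - 1) \<le> \<epsilon>" if "j > 0"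
      using est(2) t_large[OF that] by (simp add: A_def z_def U_def)
  qed
  have "norm (G w - 1) \<le> 1/4" if "w \<in> cball c 1" for w
  proof -
    have "norm (G w - 1) \<le> (1 + \<epsilon>) ^ (j + 1) - 1"
    proof (cases "j = 0")
      case True
      then show ?thesis using est(2)[OF that] by (simp add: G_def)
    next
      case False
      then show ?thesis using est[OF that] norm_power_mult_minus_1_le[of "A w" \<epsilon> "H w" j]
        by (simp add: G_def)
    qed
    also have "(1 + \<epsilon>) ^ (j + 1) \<le> exp (real (j + 1) * \<epsilon>)"
      by (rule one_plus_power_le_exp[OF \<epsilon>])
    also have "real (j + 1) * \<epsilon> = 1/8" by (simp add: \<epsilon>_def)
    also have "exp (1/8 :: real) \<le> 5/4" using exp_bound[of "1/8"] by (simp add: power2_eq_square)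
    finally show ?thesis by simp
  qed
  moreover have "continuous_on (cball c 1) G"
    unfolding G_def A_def H_def z_def using assms(4,6) by (intro continuous_intros) auto
  ultimately obtain w where w: "w \<in> cball c 1" and fp: "exp w = exp c * G w"
    using exp_eq_exp_mult_solvable by blast
  have "exp c * G w = (of_real (- t / n) * A w) ^ j * (a * H w)"
    by (simp only: exp_c G_def power_mult_distrib mult_ac)
  also have "of_real (- t / n) * A w = z w" using assms(4,5) by (simp add: A_def)
  also have "a * H w = poly h (z w)" using assms(6) by (simp add: H_def)
  finally have "exp w = z w ^ j * poly h (z w)" using fp by simp
  with w est(1)[OF w] show thesis by (intro that) (auto simp: z_def)
qed

lemma log_scale_asymptotics:
  fixes j :: nat and S :: real and t \<rho> :: "nat \<Rightarrow> real"
  defines "t \<equiv> \<lambda>n. 1 + real j * ln (real n)" and "\<rho> \<equiv> \<lambda>n. real j * ln (t n / real n)"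
  shows "(\<lambda>n. (\<bar>\<rho> n\<bar> + S) / n) \<longlonglongrightarrow> 0"
    and "j > 0 \<Longrightarrow> (\<lambda>n. (\<bar>\<rho> n + t n\<bar> + S) / t n + (\<bar>\<rho> n\<bar> + S)\<^sup>2 / (n * t n)) \<longlonglongrightarrow> 0"
    and "\<forall>\<^sub>F n in sequentially. t n \<le> n"
proof -
  show "j > 0 \<Longrightarrow> (\<lambda>n. (\<bar>\<rho> n + t n\<bar> + S) / t n + (\<bar>\<rho> n\<bar> + S)\<^sup>2 / (n * t n)) \<longlonglongrightarrow> 0"
    unfolding t_def \<rho>_def by real_asymp
  show "(\<lambda>n. (\<bar>\<rho> n\<bar> + S) / n) \<longlonglongrightarrow> 0"
  proof (cases "j = 0")
    case True
    then show ?thesis unfolding \<rho>_def by simp real_asymp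
  qed (unfold t_def \<rho>_def, real_asymp)
  show "\<forall>\<^sub>F n in sequentially. t n \<le> n"
  proof (cases "j = 0")
    case True
    show ?thesis using eventually_ge_at_top[of "1::nat"] by eventually_elim (simp add: t_def True)
  qed (unfold t_def, real_asymp)
qed

lemma exp_equation_solution_near_log_center:
  fixes h :: "complex poly" and j n :: nat and t r S :: real and s :: complex
  defines "a \<equiv> poly h 0" and "\<epsilon> \<equiv> 1 / (8 * (real j + 1))" and "\<rho> \<equiv> real j * ln (t / n)"
  assumes "n > 0" and "0 < t" and "t \<le> n" and "a \<noteq> 0" and exp_s: "exp s = (-1) ^ j * a"
    and "norm s + 1 \<le> S" and h_near: "\<And>z. norm z < r \<Longrightarrow> norm (poly h z / a - 1) \<le> \<epsilon>"
    and n_large: "(\<bar>\<rho>\<bar> + S) / n < min (1/2) (r / 2)"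
    and t_large: "j > 0 \<Longrightarrow> (\<bar>\<rho> + t\<bar> + S) / t + (\<bar>\<rho>\<bar> + S)\<^sup>2 / (n * t) \<le> \<epsilon>"
  obtains w :: complex where "\<bar>Im w - Im s\<bar> \<le> 1" and "Re w \<le> Re s + 1"
    and "norm (exp (w / n) - 1) < r" and "(exp (w / n) - 1) ^ j * poly h (exp (w / n) - 1) = exp w"
proof -
  define c where "c = of_real \<rho> + s"
  have "exp c = of_real (- t / n) ^ j * a"
    using assms(4,5) by (simp add: c_def \<rho>_def exp_add exp_s exp_of_real exp_of_nat_mult power_minus')
  have "norm c \<le> \<bar>\<rho>\<bar> + norm s" by (metis c_def norm_of_real norm_triangle_ineq)
  then have c: "norm c + 1 \<le> \<bar>\<rho>\<bar> + S" using assms(9) by simp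
  have "c + t = of_real (\<rho> + t) + s" by (simp add: c_def)
  then have "norm (c + t) \<le> \<bar>\<rho> + t\<bar> + norm s" by (metis norm_of_real norm_triangle_ineq)
  then have ct: "norm (c + t) + 1 \<le> \<bar>\<rho> + t\<bar> + S" using assms(9) by simp
  have "(norm c + 1) / n \<le> (\<bar>\<rho>\<bar> + S) / n" using c by (simp add: divide_right_mono)
  with n_large have U_small: "(norm c + 1) / n \<le> 1/2" "(norm c + 1) / n < r / 2"
    unfolding min_less_iff_conj by linarith+
  have "(norm (c + t) + 1) / t + (norm c + 1)\<^sup>2 / (n * t) \<le> \<epsilon>" if "j > 0"
  proof -
    have "(norm c + 1)\<^sup>2 \<le> (\<bar>\<rho>\<bar> + S)\<^sup>2" using c by (simp add: power_mono)
    then have "(norm (c + t) + 1) / t + (norm c + 1)\<^sup>2 / (n * t)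
        \<le> (\<bar>\<rho> + t\<bar> + S) / t + (\<bar>\<rho>\<bar> + S)\<^sup>2 / (n * t)"
      using ct assms(5) by (intro add_mono[OF divide_right_mono divide_right_mono]) auto
    with t_large[OF that] show ?thesis by linarith
  qed
  with \<open>exp c = _\<close> obtain w where w: "w \<in> cball c 1" "norm (exp (w / n) - 1) < r"
    and eq: "(exp (w / n) - 1) ^ j * poly h (exp (w / n) - 1) = exp w"
    using exp_equation_solution_in_cball[where n=n and t=t and h=h and c=c and r=r and j=j,
        folded a_def \<epsilon>_def] assms(4,5,7) h_near U_small
    by blast
  have "norm (w - c) \<le> 1" using w(1) by (simp add: dist_norm norm_minus_commute)
  then have "\<bar>Im w - Im c\<bar> \<le> 1" "Re w \<le> Re c + 1"
    using abs_Im_le_cmod[of "w - c"] abs_Re_le_cmod[of "w - c"] by auto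
  moreover have "\<rho> \<le> 0" using assms(5,6) by (simp add: \<rho>_def mult_nonneg_nonpos)
  ultimately show thesis using w(2) eq by (intro that) (auto simp: c_def)
qed

lemma exp_i_pi_multiples:
  "exp (\<i> * of_real (real j * pi + 2 * pi * real l)) = (-1) ^ j"
proof -
  have "\<i> * of_real (real j * pi + 2 * pi * real l) = of_nat j * (pi * \<i>) + of_nat l * (2 * pi * \<i>)"
    by (simp add: algebra_simps)
  then show ?thesis by (simp only: exp_add exp_of_nat_mult exp_pi_i exp_two_pi_i) simp
qed

text \<open>
  The scale t = 1 + j ln n approximately solves t = j ln(n/t), i.e. e^(-t) \<approx> (t/n)^j, so that
  the centres j ln(t/n) + i(j\<pi> + 2\<pi>l) + Ln h(0) are approximate solutions.
\<close>
lemma eventually_exp_power_mult_poly_solutions: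
  fixes h :: "complex poly" and j m :: nat and r :: real
  defines "a \<equiv> poly h 0"
  assumes "a \<noteq> 0" and "r > 0"
  shows "\<forall>\<^sub>F n in sequentially. \<forall>l<m. \<exists>w::complex.
           \<bar>Im w - (real j * pi + Im (Ln a) + 2 * pi * l)\<bar> \<le> 1 \<and> Re w < norm (Ln a) + 2 \<and>
           norm (exp (w / n) - 1) < r \<and> (exp (w / n) - 1) ^ j * poly h (exp (w / n) - 1) = exp w"
proof -
  define s where "s l = \<i> * of_real (real j * pi + 2 * pi * real l) + Ln a" for l :: nat
  define S where "S = real j * pi + 2 * pi * real m + norm (Ln a) + 1"
  have norm_s: "norm (s l) + 1 \<le> S" if "l < m" for l
  proof -
    have "norm (s l) \<le> norm (\<i> * of_real (real j * pi + 2 * pi * real l)) + norm (Ln a)"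
      unfolding s_def by (rule norm_triangle_ineq)
    also have "norm (\<i> * of_real (real j * pi + 2 * pi * real l)) = real j * pi + 2 * pi * real l"
      unfolding norm_mult norm_ii norm_of_real by simp
    finally have "norm (s l) \<le> real j * pi + 2 * pi * real l + norm (Ln a)" .
    moreover have "2 * pi * real l \<le> 2 * pi * real m" using that by simp
    ultimately show ?thesis unfolding S_def by linarith
  qed
  have exp_s: "exp (s l) = (-1) ^ j * a" for l
    unfolding s_def exp_add exp_i_pi_multiples using assms(2) by simp
  define \<epsilon> where "\<epsilon> = 1 / (8 * (real j + 1))"
  have "\<epsilon> > 0" by (simp add: \<epsilon>_def)
  obtain d where "d > 0" and d: "\<And>z. dist z 0 < d \<Longrightarrow> dist (poly h z / a) 1 < \<epsilon>"
    using continuous_at_eps_delta[THEN iffD1, of 0 "\<lambda>z. poly h z / a"] assms(2) \<open>\<epsilon> > 0\<close>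
    by (auto simp: a_def intro: continuous_intros)
  define r' where "r' = min r d"
  have h_near: "\<And>z. norm z < r' \<Longrightarrow> norm (poly h z / a - 1) \<le> \<epsilon>"
    using d by (force simp: r'_def dist_norm)
  define t where "t n = 1 + real j * ln (real n)" for n :: nat
  define \<rho> where "\<rho> n = real j * ln (t n / real n)" for n :: nat
  have asymp: "(\<lambda>n. (\<bar>\<rho> n\<bar> + S) / n) \<longlonglongrightarrow> 0"
      "j > 0 \<Longrightarrow> (\<lambda>n. (\<bar>\<rho> n + t n\<bar> + S) / t n + (\<bar>\<rho> n\<bar> + S)\<^sup>2 / (n * t n)) \<longlonglongrightarrow> 0"
      "\<forall>\<^sub>F n in sequentially. t n \<le> n"
    unfolding t_def[abs_def] \<rho>_def[abs_def] by (fact log_scale_asymptotics)+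
  have "\<forall>\<^sub>F n in sequentially. (\<bar>\<rho> n\<bar> + S) / n < min (1/2) (r' / 2)"
    by (rule order_tendstoD(2)[OF asymp(1)]) (use \<open>r > 0\<close> \<open>d > 0\<close> in \<open>simp add: r'_def\<close>)
  moreover have "\<forall>\<^sub>F n in sequentially.
      j > 0 \<longrightarrow> (\<bar>\<rho> n + t n\<bar> + S) / t n + (\<bar>\<rho> n\<bar> + S)\<^sup>2 / (n * t n) \<le> \<epsilon>"
  proof (cases "j > 0")
    case True
    then show ?thesis using order_tendstoD(2)[OF asymp(2) \<open>\<epsilon> > 0\<close>] by (simp add: eventually_mono)
  qed simp
  ultimately show ?thesis using asymp(3) eventually_gt_at_top[of 0]
  proof eventually_elim
    case (elim n)
    have "0 < t n" using elim(4) by (simp add: t_def add_pos_nonneg)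
    show ?case
    proof (intro allI impI)
      fix l assume "l < m"
      obtain w where "\<bar>Im w - Im (s l)\<bar> \<le> 1" "Re w \<le> Re (s l) + 1" "norm (exp (w / n) - 1) < r'"
        "(exp (w / n) - 1) ^ j * poly h (exp (w / n) - 1) = exp w"
        by (rule exp_equation_solution_near_log_center[where h = h and j = j and n = n and t = "t n"
              and r = r' and s = "s l" and S = S, folded a_def \<epsilon>_def,
              OF elim(4) \<open>0 < t n\<close> elim(3) assms(2) exp_s norm_s[OF \<open>l < m\<close>] h_near
              elim(1)[unfolded \<rho>_def] elim(2)[rule_format, unfolded \<rho>_def]])
      moreover have "Re (Ln a) \<le> norm (Ln a)" by (rule complex_Re_le_cmod)
      ultimately show "\<exists>w::complex. \<bar>Im w - (real j * pi + Im (Ln a) + 2 * pi * l)\<bar> \<le> 1 \<and>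
          Re w < norm (Ln a) + 2 \<and> norm (exp (w / n) - 1) < r \<and>
          (exp (w / n) - 1) ^ j * poly h (exp (w / n) - 1) = exp w"
        by (intro exI) (auto simp: s_def r'_def)
    qed
  qed
qed

lemma eventually_exp_poly_solutions:
  fixes p :: "complex poly" and m :: nat
  assumes "p \<noteq> 0"
  obtains \<theta> K :: real where "K > 0"
    and "\<And>r. r > 0 \<Longrightarrow> \<forall>\<^sub>F n in sequentially. \<forall>l<m. \<exists>w::complex.
           \<bar>Im w - (\<theta> + 2 * pi * l)\<bar> \<le> 1 \<and> Re w < K \<and>
           norm (exp (w / n) - 1) < r \<and> poly p (exp (w / n) - 1) = exp w"
proof -
  obtain h where p: "p = [:0, 1:] ^ order 0 p * h" and "\<not> [:0, 1:] dvd h"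
    using order_decomp[OF assms, of 0] by auto
  then have "poly h 0 \<noteq> 0" using poly_eq_0_iff_dvd[of h 0] by simp
  show thesis
  proof (rule that[where \<theta> = "real (order 0 p) * pi + Im (Ln (poly h 0))" and K = "norm (Ln (poly h 0)) + 2"])
    fix r :: real assume "r > 0"
    show "\<forall>\<^sub>F n in sequentially. \<forall>l<m. \<exists>w::complex.
        \<bar>Im w - (real (order 0 p) * pi + Im (Ln (poly h 0)) + 2 * pi * l)\<bar> \<le> 1 \<and>
        Re w < norm (Ln (poly h 0)) + 2 \<and> norm (exp (w / n) - 1) < r \<and> poly p (exp (w / n) - 1) = exp w"
      using eventually_exp_power_mult_poly_solutions[OF \<open>poly h 0 \<noteq> 0\<close> \<open>r > 0\<close>, of m "order 0 p"]
      by (subst p) (simp add: poly_monom)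
  qed (simp add: add_nonneg_pos)
qed

lemma card_le_zeros_in:
  assumes "q \<noteq> 0" and "Z \<subseteq> W" and "\<And>z. z \<in> Z \<Longrightarrow> poly q z = 0"
  shows "card Z \<le> zeros_in q W"
proof -
  have roots: "finite {z \<in> W. poly q z = 0}" using poly_roots_finite[OF assms(1)] by simp
  have Z: "Z \<subseteq> {z \<in> W. poly q z = 0}" using assms(2,3) by auto
  have "card Z = (\<Sum>z\<in>Z. 1)" by simp
  also have "(\<Sum>z\<in>Z. 1) \<le> (\<Sum>z\<in>Z. order z q)"
  proof (rule sum_mono)
    fix z assume "z \<in> Z"
    then have "order z q \<noteq> 0" using assms(1,3) order_root by blast
    then show "1 \<le> order z q" by simp
  qed
  also have "\<dots> \<le> zeros_in q W"
    unfolding zeros_in_def using roots Z by (intro sum_mono2) auto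
  finally show ?thesis .
qed

lemma inj_on_exp_divide:
  fixes w :: "nat \<Rightarrow> complex"
  assumes "m \<le> n" and "\<And>l. l < m \<Longrightarrow> \<bar>Im (w l) - (\<theta> + 2 * pi * l)\<bar> \<le> 1"
  shows "inj_on (\<lambda>l. exp (w l / n)) {..<m}"
proof (rule inj_onI)
  fix l l' assume l: "l \<in> {..<m}" and l': "l' \<in> {..<m}" and eq: "exp (w l / n) = exp (w l' / n)"
  have Im_diff: "\<bar>Im (w l) - Im (w l') - 2 * pi * (real l - real l')\<bar> \<le> 2"
    using assms(2)[of l] assms(2)[of l'] l l' by (auto simp: algebra_simps)
  have "n > 0" using l assms(1) by auto
  have "2 * pi * \<bar>real l - real l'\<bar> < 2 * pi * n - 2"
  proof -
    have "\<bar>real l - real l'\<bar> + 1 \<le> n" using l l' assms(1) by auto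
    then have "2 * pi * (\<bar>real l - real l'\<bar> + 1) \<le> 2 * pi * n" by simp
    with pi_gt3 show ?thesis by (simp add: algebra_simps)
  qed
  moreover have "\<bar>Im (w l) - Im (w l')\<bar>
      \<le> \<bar>Im (w l) - Im (w l') - 2 * pi * (real l - real l')\<bar> + 2 * pi * \<bar>real l - real l'\<bar>"
    using abs_triangle_ineq[of "Im (w l) - Im (w l') - 2 * pi * (real l - real l')"
        "2 * pi * (real l - real l')"] by (simp add: abs_mult)
  ultimately have "\<bar>Im (w l) - Im (w l')\<bar> < 2 * pi * n" using Im_diff by linarith
  then have "\<bar>Im (w l / n) - Im (w l' / n)\<bar> < 2 * pi"
    using \<open>n > 0\<close> by (simp add: Im_divide_of_nat diff_divide_distrib[symmetric] field_simps)
  then have "w l = w l'" using exp_complex_eqI[OF _ eq] \<open>n > 0\<close> by simp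
  with Im_diff have "2 * pi * \<bar>real l - real l'\<bar> \<le> 2" by (simp add: abs_mult)
  have "\<bar>real l - real l'\<bar> < 1"
  proof (rule ccontr)
    assume "\<not> \<bar>real l - real l'\<bar> < 1"
    then have "2 * pi * 1 \<le> 2 * pi * \<bar>real l - real l'\<bar>" by (intro mult_left_mono) auto
    with \<open>2 * pi * \<bar>real l - real l'\<bar> \<le> 2\<close> pi_gt3 show False by linarith
  qed
  then show "l = l'" by linarith
qed

lemma norm_mult_power_diff_less_1:
  fixes z y :: complex and k r B M :: real
  assumes "k > 0" and "norm z < r" and "norm (1 + z) ^ n \<le> B" and "norm y \<le> M"
    and "k * r * (B + M) \<le> 1"
  shows "norm (of_real k * (z * ((1 + z) ^ n - y))) < 1"
proof -
  have "norm ((1 + z) ^ n - y) \<le> B + M"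
    using norm_triangle_ineq4[of "(1 + z) ^ n" y] assms(3,4) by (simp add: norm_power)
  then have le: "norm (of_real k * (z * ((1 + z) ^ n - y))) \<le> k * (norm z * (B + M))"
    using assms(1) by (simp add: norm_mult mult_left_mono)
  show ?thesis
  proof (cases "B + M > 0")
    case True
    then have "k * (norm z * (B + M)) < k * (r * (B + M))" using assms(1,2) by simp
    with le assms(5) show ?thesis by (simp add: mult.assoc)
  next
    case False
    then have "k * (norm z * (B + M)) \<le> 0"
      using assms(1) by (simp add: mult_nonneg_nonpos)
    with le show ?thesis by linarith
  qed
qed

lemma small_domain_with_many_zeros:
  fixes p :: "complex poly" and k r K M \<theta> :: real and m n :: nat
  defines "q \<equiv> smult (complex_of_real k) ([:0, 1:] * ([:1, 1:] ^ n - p))"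
  assumes "k > 0" and "r > 0" and "K > 0" and "degree p < n" and "m \<le> n"
    and p_bound: "\<And>z. norm z < r \<Longrightarrow> norm (poly p z) \<le> M" and "k * r * (exp K + M) \<le> 1"
    and roots: "\<And>l. l < m \<Longrightarrow> \<exists>w::complex. \<bar>Im w - (\<theta> + 2 * pi * l)\<bar> \<le> 1 \<and> Re w < K \<and>
                   norm (exp (w / n) - 1) < r \<and> poly p (exp (w / n) - 1) = exp w"
  obtains W where "open W" and "connected W" and "0 \<in> W" and "W \<subseteq> ball 0 r"
    and "zeros_in q W \<ge> m" and "poly q ` W \<subseteq> ball 0 1"
proof -
  have "n > 0" using assms(5) by simp
  define W :: "complex set" where "W = ball 0 r \<inter> ball (-1) (exp (K / n))"
  have W_iff: "z \<in> W \<longleftrightarrow> norm z < r \<and> norm (1 + z) < exp (K / n)" for z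
  proof -
    have "dist (-1) z = norm (1 + z)" using norm_minus_cancel[of "1 + z"] by (simp add: dist_norm)
    then show ?thesis by (simp add: W_def)
  qed
  have poly_q: "poly q z = k * (z * ((1 + z) ^ n - poly p z))" for z
    by (simp add: q_def poly_power algebra_simps)
  have "q \<noteq> 0"
  proof
    assume "q = 0"
    then have "[:1, 1:] ^ n = p" using \<open>k > 0\<close> by (simp add: q_def)
    then show False using assms(5) by (metis degree_linear_power less_irrefl)
  qed
  obtain w where w: "\<And>l. l < m \<Longrightarrow> \<bar>Im (w l) - (\<theta> + 2 * pi * l)\<bar> \<le> 1 \<and> Re (w l) < K \<and>
      norm (exp (w l / n) - 1) < r \<and> poly p (exp (w l / n) - 1) = exp (w l)"
    using roots by metis
  define Z where "Z = (\<lambda>l. exp (w l / n) - 1) ` {..<m}"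
  have "card Z = m"
    unfolding Z_def using inj_on_exp_divide[of m n w \<theta>] assms(6) w
    by (subst card_image) (auto simp: inj_on_def)
  have "exp (w l / n) - 1 \<in> W \<and> poly q (exp (w l / n) - 1) = 0" if "l < m" for l
  proof -
    have "norm (exp (w l / n)) < exp (K / n)"
      using w[OF that] \<open>n > 0\<close> by (simp add: divide_strict_right_mono)
    moreover have "exp (w l / n) ^ n = exp (w l)"
      using \<open>n > 0\<close> by (simp flip: exp_of_nat_mult)
    ultimately show ?thesis using w[OF that] by (simp add: W_iff poly_q)
  qed
  then have "Z \<subseteq> W" and "\<And>z. z \<in> Z \<Longrightarrow> poly q z = 0" by (auto simp: Z_def)
  with \<open>q \<noteq> 0\<close> \<open>card Z = m\<close> have "m \<le> zeros_in q W" using card_le_zeros_in by metis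
  moreover have "poly q ` W \<subseteq> ball 0 1"
  proof clarify
    fix z assume "z \<in> W"
    then have z: "norm z < r" "norm (1 + z) < exp (K / n)" by (auto simp: W_iff)
    have "norm (1 + z) ^ n \<le> exp (K / n) ^ n" using z(2) by (intro power_mono) auto
    also have "\<dots> = exp K" using \<open>n > 0\<close> by (simp flip: exp_of_nat_mult)
    finally show "poly q z \<in> ball 0 1"
      using norm_mult_power_diff_less_1[OF \<open>k > 0\<close> z(1) _ p_bound[OF z(1)] assms(8)]
      by (simp add: poly_q)
  qed
  moreover have "open W" "connected W" "0 \<in> W" "W \<subseteq> ball 0 r"
    using \<open>r > 0\<close> \<open>K > 0\<close> \<open>n > 0\<close> by (auto simp: W_def convex_connected convex_Int W_iff)
  ultimately show thesis using that by blast
qed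

theorem lemma3p6:
  fixes k \<delta> :: real and p :: "complex poly" and m :: nat
  assumes "k > 0" and "\<delta> > 0" and "p \<noteq> 0"
  shows "\<forall>\<^sub>F n in sequentially. \<exists>W :: complex set.
           open W \<and> connected W \<and> 0 \<in> W \<and> W \<subseteq> ball 0 \<delta> \<and>
           (let q = smult (complex_of_real k) ([:0, 1:] * ([:1, 1:] ^ n - p))
            in zeros_in q W \<ge> m \<and> poly q ` W \<subseteq> ball 0 1)"
proof -
  obtain \<theta> K where "K > 0" and roots: "\<And>r. r > 0 \<Longrightarrow> \<forall>\<^sub>F n in sequentially. \<forall>l<m.
      \<exists>w::complex. \<bar>Im w - (\<theta> + 2 * pi * l)\<bar> \<le> 1 \<and> Re w < K \<and>
        norm (exp (w / n) - 1) < r \<and> poly p (exp (w / n) - 1) = exp w"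
    using eventually_exp_poly_solutions[OF assms(3)] by blast
  have "bounded (poly p ` cball 0 1)"
    by (intro compact_imp_bounded compact_continuous_image continuous_intros) simp
  then obtain M where "M > 0" and M: "\<And>z. z \<in> cball 0 1 \<Longrightarrow> norm (poly p z) \<le> M"
    unfolding bounded_pos by blast
  define r where "r = min (min \<delta> 1) (1 / (k * (exp K + M)))"
  have pos: "k * (exp K + M) > 0" using assms(1) \<open>M > 0\<close> by (simp add: add_pos_pos)
  then have "r > 0" using assms(2) by (simp add: r_def)
  have "r \<le> 1 / (k * (exp K + M))" by (simp add: r_def)
  with pos have "k * r * (exp K + M) \<le> 1" by (simp add: pos_le_divide_eq mult_ac)
  have "\<And>z. norm z < r \<Longrightarrow> norm (poly p z) \<le> M" using M by (simp add: r_def)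
  show ?thesis
    using roots[OF \<open>r > 0\<close>] eventually_gt_at_top[of "max m (degree p)"]
  proof eventually_elim
    case (elim n)
    obtain W where "open W" "connected W" "0 \<in> W" "W \<subseteq> ball 0 r"
      "zeros_in (smult (complex_of_real k) ([:0, 1:] * ([:1, 1:] ^ n - p))) W \<ge> m"
      "poly (smult (complex_of_real k) ([:0, 1:] * ([:1, 1:] ^ n - p))) ` W \<subseteq> ball 0 1"
      using small_domain_with_many_zeros[of k r K p n m M \<theta>] elim assms(1) \<open>r > 0\<close> \<open>K > 0\<close>
        \<open>k * r * (exp K + M) \<le> 1\<close> \<open>\<And>z. norm z < r \<Longrightarrow> norm (poly p z) \<le> M\<close> by auto
    moreover have "ball 0 r \<subseteq> ball (0::complex) \<delta>" by (simp add: r_def subset_ball)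
    ultimately show ?case unfolding Let_def by blast
  qed
qed

end
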